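(* Let $\{g_n\}_{n=1}^\infty$ be a nested sequence of geodesics in the unit disk $\mathbb{D}$ such that any two adjacent geodesics $g_n,g_{n+1}$ share an ideal endpoint and no three of the geodesics share an ideal endpoint. Fix $P_1\in g_1$ and let $h$ be the piecewise horocyclic path starting at $P_1$ that is the concatenation of horocyclic arcs $h_n$, where $h_n$ lies in the wedge $W_n$ between $g_n$ and $g_{n+1}$, is orthogonal to both, lies on a horocycle centered at the common endpoint of $g_n$ and $g_{n+1}$, and starts at the endpoint of $h_{n-1}$ on $g_n$ (with $h_1$ starting at $P_1$). Then the sequence $\{g_n\}$ accumulates to a single point of $S^1$ if and only if $h$ has infinite hyperbolic length.
   Context: Nested means that for each $n\ge2$ the geodesics $g_{n-1}$ and $g_{n+1}$ lie in different components of $\mathbb{D}\setminus g_n$. The wedge $W_n$ is the region between $g_n$ and $g_{n+1}$; its vertex is their common ideal endpoint. A nested sequence either accumulates to a single point of $S^1$ or to a geodesic in $\mathbb{D}$. *)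

theory Defs
  imports "HOL-Analysis.Analysis"
begin

abbreviation Disk :: "complex set" where "Disk \<equiv> ball 0 1"

text \<open>A geodesic of the disk is given by its (ordered pair of) distinct ideal endpoints.\<close>
definition is_geod :: "complex \<times> complex \<Rightarrow> bool" where
  "is_geod G \<longleftrightarrow> cmod (fst G) = 1 \<and> cmod (snd G) = 1 \<and> fst G \<noteq> snd G"

definition ends :: "complex \<times> complex \<Rightarrow> complex set" where
  "ends G = {fst G, snd G}"

text \<open>Point set of the geodesic with endpoints a, b: the arc of the circle (or diameter)
  through a and b orthogonal to the unit circle.  The Moebius map z \<mapsto> (z-a)/(z-b)
  sends the unit circle to the line {u. cnj u = (b/a) u} and the geodesic to the
  orthogonal line {u. cnj u = -(b/a) u}.\<close>
definition geod_set :: "complex \<times> complex \<Rightarrow> complex set" where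
  "geod_set G = (let a = fst G; b = snd G in
     {z. cmod z < 1 \<and> cnj ((z - a) / (z - b)) = - (b / a) * ((z - a) / (z - b))})"

definition nested :: "(nat \<Rightarrow> complex \<times> complex) \<Rightarrow> bool" where
  "nested g \<longleftrightarrow> (\<forall>n\<ge>1.
      geod_set (g (n - 1)) \<inter> geod_set (g n) = {} \<and>
      geod_set (g (Suc n)) \<inter> geod_set (g n) = {} \<and>
      (\<forall>x\<in>geod_set (g (n - 1)). \<forall>y\<in>geod_set (g (Suc n)).
          \<not> connected_component (Disk - geod_set (g n)) x y))"

definition wedge :: "complex \<times> complex \<Rightarrow> complex \<times> complex \<Rightarrow> complex set" where
  "wedge G H = {z. z \<in> Disk - geod_set G - geod_set H \<and>
      (\<exists>y\<in>geod_set H. connected_component (Disk - geod_set G) z y) \<and>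
      (\<exists>y\<in>geod_set G. connected_component (Disk - geod_set H) z y)}"

text \<open>Horocycle centred at the ideal point p: a Euclidean circle of radius r (0<r<1)
  internally tangent to the unit circle at p, with p removed.\<close>
definition horocycle :: "complex \<Rightarrow> real \<Rightarrow> complex set" where
  "horocycle p r = {z. cmod (z - of_real (1 - r) * p) = r \<and> z \<noteq> p}"

text \<open>Hyperbolic length (curvature -1) of a C1 path in the disk.\<close>
definition hyp_length :: "(real \<Rightarrow> complex) \<Rightarrow> real" where
  "hyp_length \<gamma> = integral {0..1}
      (\<lambda>t. 2 * norm (vector_derivative \<gamma> (at t)) / (1 - (cmod (\<gamma> t))\<^sup>2))"

definition accumulates_to_point :: "(nat \<Rightarrow> complex \<times> complex) \<Rightarrow> complex \<Rightarrow> bool" where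
  "accumulates_to_point g \<xi> \<longleftrightarrow> cmod \<xi> = 1 \<and>
      (\<forall>e>0. \<exists>N. \<forall>n\<ge>N. geod_set (g n) \<subseteq> ball \<xi> e)"

end

theory Submission
  imports Defs
begin

(*
  A Cayley transform sending an ideal point p to infinity maps the disk isometrically onto
  the upper half-plane with metric |dw| / Im w: geodesics ending at p become vertical
  half-lines, the other geodesics semicircles, and horocycles at p horizontal lines
  Im w = kappa. So the arc h n, on a horocycle centred at the vertex of the n-th wedge, has
  hyperbolic length L n = |Delta Re w| / kappa n.

  If the L n are summable, comparing the starting points P n = h n 0 of successive arcs
  gives 1 - |P n|^2 >= (1 - |P 0|^2) exp (-2 (L 0 + ... + L (n - 1))): the points P n of
  g n stay in a compact part of the disk, so the g n cannot shrink to a boundary point.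

  Conversely, in the chart sending the first endpoint of g 0 to infinity, nestedness forces
  the foot of each new endpoint to lie strictly between the feet of the previous geodesic,
  so these feet span nested intervals. If the interval lengths tend to 0, the geodesics
  shrink to the limit point. Otherwise the Euclidean chords d n of the g n are bounded below,
  hence so are the heights kappa n, as kappa (n + 2) = kappa n (d (n + 1) / d (n + 2))^2.
  Then L n = 2 e n / (d n d (n + 1) kappa n), where e n is the distance between the outer
  endpoints of g n and g (n + 1); these distances are summable because the interval lengths
  telescope.
*)

section \<open>Cayley charts of the disk\<close>

definition cayley :: "complex \<Rightarrow> complex \<Rightarrow> complex" where
  "cayley p z = \<i> * (p + z) / (p - z)"

definition cayley_inv :: "complex \<Rightarrow> complex \<Rightarrow> complex" where
  "cayley_inv p w = p * (w - \<i>) / (w + \<i>)"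

lemma unit_mult_cnj: "cmod q = 1 \<Longrightarrow> q * cnj q = 1"
  by (metis complex_norm_square mult.commute of_real_1 power_one)

lemma norm_mult_self: "cmod z * cmod z = Re z * Re z + Im z * Im z"
  by (metis cmod_power2 power2_eq_square)

lemma cayley_inv_cayley:
  assumes q: "cmod q = 1" and z: "z \<noteq> q"
  shows "cayley_inv q (cayley q z) = z"
proof -
  have q0: "q \<noteq> 0" and d: "q - z \<noteq> 0" using q z by auto
  have "\<i> * (q + z) / (q - z) + \<i> = 2 * \<i> * q / (q - z)"
    using d by (simp add: field_simps)
  then have "cayley q z + \<i> \<noteq> 0" using q0 d by (simp add: cayley_def)
  then show ?thesis unfolding cayley_inv_def cayley_def using d q0
    by (simp add: field_simps)
qed

lemma cayley_cayley_inv: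
  assumes q: "cmod q = 1" and w: "w \<noteq> - \<i>"
  shows "cayley q (cayley_inv q w) = w"
proof -
  have q0: "q \<noteq> 0" using q by auto
  have d: "w + \<i> \<noteq> 0" using w by (auto simp: complex_eq_iff)
  have nz: "2 * \<i> * q / (w + \<i>) \<noteq> 0" using d q0 by simp
  have "q - cayley_inv q w = 2 * \<i> * q / (w + \<i>)"
    and "q + cayley_inv q w = 2 * w * q / (w + \<i>)"
    using d by (simp_all add: cayley_inv_def field_simps)
  then have "cayley q (cayley_inv q w) = \<i> * (2 * w * q / (w + \<i>)) / (2 * \<i> * q / (w + \<i>))"
    unfolding cayley_def by simp
  also have "\<dots> = w * (2 * \<i> * q / (w + \<i>)) / (2 * \<i> * q / (w + \<i>))"
    by (simp add: algebra_simps)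
  finally show ?thesis using nz by simp
qed

lemma Im_cayley:
  assumes q: "cmod q = 1" and z: "z \<noteq> q"
  shows "Im (cayley q z) = (1 - (cmod z)\<^sup>2) / (cmod (q - z))\<^sup>2"
proof -
  have qq: "q * cnj q = 1" using q unit_mult_cnj by blast
  have d: "q - z \<noteq> 0" using z by auto
  have "cayley q z = \<i> * (q + z) * cnj (q - z) / ((q - z) * cnj (q - z))"
    unfolding cayley_def using d by simp
  also have "(q - z) * cnj (q - z) = of_real ((cmod (q - z))\<^sup>2)"
    by (metis complex_norm_square)
  also have "\<i> * (q + z) * cnj (q - z)
      = \<i> * (q * cnj q - z * cnj z) + \<i> * (z * cnj q - q * cnj z)"
    by (simp add: algebra_simps)
  also have "\<dots> = \<i> * of_real (1 - (cmod z)\<^sup>2) - 2 * of_real (Im (z * cnj q))"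
    using qq by (simp add: complex_eq_iff algebra_simps power2_eq_square norm_mult_self)
  finally show ?thesis
    by (simp add: Im_divide_of_real)
qed

lemma Im_cayley_pos:
  assumes q: "cmod q = 1" and z: "cmod z < 1"
  shows "Im (cayley q z) > 0"
proof -
  have zq: "z \<noteq> q" using q z by auto
  have "(cmod z)\<^sup>2 < 1" using z by (simp add: abs_square_less_1)
  then show ?thesis using Im_cayley[OF q zq] zq by simp
qed

lemma cayley_inv_cayley_disk:
  assumes "cmod q = 1" "cmod z < 1"
  shows "cayley_inv q (cayley q z) = z"
  using assms by (intro cayley_inv_cayley) auto

lemma Im_cayley_boundary:
  assumes "cmod q = 1" "cmod a = 1" "a \<noteq> q"
  shows "Im (cayley q a) = 0"
  using Im_cayley[OF assms(1,3)] assms(2) by simp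

lemma cayley_inv_Re_cayley_boundary:
  assumes "cmod q = 1" "cmod a = 1" "a \<noteq> q"
  shows "cayley_inv q (of_real (Re (cayley q a))) = a"
proof -
  have "cayley q a = of_real (Re (cayley q a))"
    using Im_cayley_boundary[OF assms] by (simp add: complex_eq_iff)
  then show ?thesis using cayley_inv_cayley[OF assms(1,3)] by simp
qed

lemma cayley_diff:
  "a \<noteq> p \<Longrightarrow> b \<noteq> p \<Longrightarrow> cayley p a - cayley p b = 2 * \<i> * p * (a - b) / ((p - a) * (p - b))"
  unfolding cayley_def by (simp add: field_simps)

lemma cayley_inv_diff:
  "u + \<i> \<noteq> 0 \<Longrightarrow> v + \<i> \<noteq> 0 \<Longrightarrow>
    cayley_inv q u - cayley_inv q v = 2 * \<i> * q * (u - v) / ((u + \<i>) * (v + \<i>))"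
  unfolding cayley_inv_def by (simp add: field_simps)

lemma diff_cayley_inv: "w + \<i> \<noteq> 0 \<Longrightarrow> q - cayley_inv q w = 2 * \<i> * q / (w + \<i>)"
  unfolding cayley_inv_def by (simp add: field_simps)

lemma one_minus_norm_cayley_inv:
  assumes q: "cmod q = 1" and w: "w + \<i> \<noteq> 0"
  shows "1 - (cmod (cayley_inv q w))\<^sup>2 = 4 * Im w / (cmod (w + \<i>))\<^sup>2"
proof -
  have n: "cmod (cayley_inv q w) = cmod (w - \<i>) / cmod (w + \<i>)"
    unfolding cayley_inv_def using q by (simp add: norm_mult norm_divide)
  have "(cmod (w + \<i>))\<^sup>2 - (cmod (w - \<i>))\<^sup>2 = 4 * Im w"
    unfolding power2_eq_square norm_mult_self by (simp add: algebra_simps)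
  moreover have "1 - (cmod (cayley_inv q w))\<^sup>2
      = ((cmod (w + \<i>))\<^sup>2 - (cmod (w - \<i>))\<^sup>2) / (cmod (w + \<i>))\<^sup>2"
    unfolding n using w by (simp add: field_simps power_divide)
  ultimately show ?thesis by simp
qed

lemma norm_cayley_inv_less_1:
  assumes q: "cmod q = 1" and w: "Im w > 0"
  shows "cmod (cayley_inv q w) < 1"
proof -
  have w1: "w + \<i> \<noteq> 0" using w by (auto simp: complex_eq_iff)
  have "1 - (cmod (cayley_inv q w))\<^sup>2 > 0"
    unfolding one_minus_norm_cayley_inv[OF q w1] using w w1 by simp
  then show ?thesis by (simp add: abs_square_less_1)
qed

lemma has_field_derivative_cayley:
  assumes "z \<noteq> p"
  shows "(cayley p has_field_derivative (2 * \<i> * p / (p - z)\<^sup>2)) (at z)"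
proof -
  have "((\<lambda>z. \<i> * (p + z) / (p - z)) has_field_derivative
      (\<i> * (p - z) - \<i> * (p + z) * (-1)) / ((p - z) * (p - z))) (at z)"
    using assms by (intro derivative_eq_intros) auto
  moreover have "(\<i> * (p - z) - \<i> * (p + z) * (-1)) / ((p - z) * (p - z)) = 2 * \<i> * p / (p - z)\<^sup>2"
    by (simp add: algebra_simps power2_eq_square)
  ultimately show ?thesis unfolding cayley_def[abs_def] by simp
qed

lemma norm_cayley_inv_of_real_diff:
  assumes q: "cmod q = 1"
  shows "cmod (cayley_inv q (of_real s) - cayley_inv q (of_real t))
    = 2 * \<bar>s - t\<bar> / (cmod (of_real s + \<i>) * cmod (of_real t + \<i>))"
proof -
  have s: "of_real s + \<i> \<noteq> 0" and t: "of_real t + \<i> \<noteq> 0" by (auto simp: complex_eq_iff)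
  show ?thesis unfolding cayley_inv_diff[OF s t] using q
    by (simp add: norm_mult norm_divide flip: of_real_diff)
qed

lemma norm_of_real_add_i_bounds: "1 \<le> cmod (of_real s + \<i>)" "cmod (of_real s + \<i>) \<le> 1 + \<bar>s\<bar>"
  using abs_Im_le_cmod[of "of_real s + \<i>"] norm_triangle_ineq[of "of_real s" \<i>] by simp_all

lemma norm_cayley_inv_of_real_diff_le:
  assumes q: "cmod q = 1"
  shows "cmod (cayley_inv q (of_real s) - cayley_inv q (of_real t)) \<le> 2 * \<bar>s - t\<bar>"
proof -
  have "1 * 1 \<le> cmod (of_real s + \<i>) * cmod (of_real t + \<i>)"
    using norm_of_real_add_i_bounds(1) by (intro mult_mono) auto
  then show ?thesis unfolding norm_cayley_inv_of_real_diff[OF q]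
    by (simp add: divide_le_eq mult_le_cancel_left1 mult.commute mult_left_mono)
qed

lemma norm_cayley_inv_of_real_diff_ge:
  assumes q: "cmod q = 1" and s: "\<bar>s\<bar> \<le> M" and t: "\<bar>t\<bar> \<le> M"
  shows "2 * \<bar>s - t\<bar> / (1 + M)\<^sup>2 \<le> cmod (cayley_inv q (of_real s) - cayley_inv q (of_real t))"
proof -
  have "cmod (of_real s + \<i>) * cmod (of_real t + \<i>) \<le> (1 + M) * (1 + M)"
    using norm_of_real_add_i_bounds(2)[of s] norm_of_real_add_i_bounds(2)[of t] s t
    by (intro mult_mono) auto
  moreover have "cmod (of_real s + \<i>) * cmod (of_real t + \<i>) > 0"
    using norm_of_real_add_i_bounds(1)[of s] norm_of_real_add_i_bounds(1)[of t]
    by (metis mult_pos_pos less_le_trans zero_less_one)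
  ultimately show ?thesis unfolding norm_cayley_inv_of_real_diff[OF q] power2_eq_square
    by (intro divide_left_mono) auto
qed

lemma norm_cayley_inv_of_real:
  assumes "cmod q = 1"
  shows "cmod (cayley_inv q (of_real x)) = 1"
proof -
  have "cmod (of_real x - \<i>) = cmod (of_real x + \<i>)" by (simp add: cmod_def)
  moreover have "cmod (of_real x + \<i>) \<noteq> 0" by (simp add: complex_eq_iff)
  ultimately show ?thesis unfolding cayley_inv_def using assms by (simp add: norm_mult norm_divide)
qed

lemma abs_Re_cayley_boundary_diff:
  assumes p: "cmod p = 1" and a: "cmod a = 1" "a \<noteq> p" and b: "cmod b = 1" "b \<noteq> p"
  shows "\<bar>Re (cayley p a) - Re (cayley p b)\<bar> = 2 * cmod (a - b) / (cmod (p - a) * cmod (p - b))"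
proof -
  have "Im (cayley p a - cayley p b) = 0"
    using Im_cayley_boundary[OF p a] Im_cayley_boundary[OF p b] by simp
  then have "\<bar>Re (cayley p a - cayley p b)\<bar> = cmod (cayley p a - cayley p b)"
    by (metis cmod_eq_Re)
  also have "\<dots> = 2 * cmod (a - b) / (cmod (p - a) * cmod (p - b))"
    unfolding cayley_diff[OF a(2) b(2)] using p by (simp add: norm_mult norm_divide)
  finally show ?thesis by simp
qed

section \<open>Geodesics in a Cayley chart\<close>

text \<open>Clearing denominators in the equation defining geod_set, using |a| = |b| = 1.\<close>

definition geod_poly :: "complex \<Rightarrow> complex \<Rightarrow> complex \<Rightarrow> complex" where
  "geod_poly a b z = (a + b) * (z * cnj z + 1) - 2 * (z + a * b * cnj z)"

definition semicircle_fun :: "real \<Rightarrow> real \<Rightarrow> complex \<Rightarrow> real" where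
  "semicircle_fun s t w = (Re w - s) * (Re w - t) + (Im w)\<^sup>2"

lemma geod_poly_commute: "geod_poly a b z = geod_poly b a z"
  unfolding geod_poly_def by (simp add: algebra_simps)

lemma semicircle_fun_commute: "semicircle_fun s t w = semicircle_fun t s w"
  unfolding semicircle_fun_def by (simp add: algebra_simps)

lemma geod_set_imp_geod_poly:
  assumes G: "is_geod G" and z: "z \<in> geod_set G"
  shows "cmod z < 1" "geod_poly (fst G) (snd G) z = 0"
proof -
  obtain a b where ab: "G = (a, b)" by (cases G)
  have a: "cmod a = 1" and b: "cmod b = 1" using G ab by (auto simp: is_geod_def)
  have aa: "a * cnj a = 1" and bb: "b * cnj b = 1" using a b unit_mult_cnj by blast+
  have z1: "cmod z < 1" and e: "cnj ((z - a) / (z - b)) = - (b / a) * ((z - a) / (z - b))"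
    using z ab by (auto simp: geod_set_def Let_def)
  have zb: "z - b \<noteq> 0" and zb': "cnj z - cnj b \<noteq> 0"
    using z1 b by (auto simp flip: complex_cnj_diff)
  have a0: "a \<noteq> 0" using a by auto
  have "(cnj z - cnj a) / (cnj z - cnj b) = - (b / a) * ((z - a) / (z - b))" using e by simp
  then have "a * (cnj z - cnj a) * (z - b) = - b * (z - a) * (cnj z - cnj b)"
    using zb zb' a0 by (simp add: field_simps)
  then have "geod_poly a b z = 0" unfolding geod_poly_def using aa bb by algebra
  then show "cmod z < 1" "geod_poly (fst G) (snd G) z = 0" using z1 ab by simp_all
qed

text \<open>The next two identities are geod_poly in the chart cayley_inv q, with the quotients
  (x - i)/(x + i) abstracted to unknowns so that the method algebra can verify them.\<close>

lemma geod_poly_pullback_identity: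
  fixes q qc w wc s t A B Z Zc ii :: complex
  assumes "q * qc = 1" "A * (s + ii) = s - ii" "B * (t + ii) = t - ii" "Z * (w + ii) = w - ii"
    "Zc * (wc - ii) = wc + ii" "ii * ii = -1"
  shows "((q*A + q*B) * ((q*Z) * (qc*Zc) + 1) - 2 * (q*Z + (q*A) * (q*B) * (qc*Zc)))
     * ((s + ii) * (t + ii) * (w + ii) * (wc - ii))
     = 2 * q * ((w + wc - 2 * s) * (w + wc - 2 * t) - (w - wc)\<^sup>2)"
  using assms by algebra

lemma geod_poly_pullback_identity_pole:
  fixes q qc w wc t B Z Zc ii :: complex
  assumes "q * qc = 1" "B * (t + ii) = t - ii" "Z * (w + ii) = w - ii"
    "Zc * (wc - ii) = wc + ii" "ii * ii = -1"
  shows "((q + q*B) * ((q*Z) * (qc*Zc) + 1) - 2 * (q*Z + q * (q*B) * (qc*Zc)))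
     * ((t + ii) * (w + ii) * (wc - ii))
     = 4 * q * (2 * t - (w + wc))"
  using assms by algebra

lemma cnj_cayley_inv: "cnj (cayley_inv q w) = cnj q * ((cnj w + \<i>) / (cnj w - \<i>))"
  unfolding cayley_inv_def by simp

lemma cayley_inv_eq: "cayley_inv q w = q * ((w - \<i>) / (w + \<i>))"
  unfolding cayley_inv_def by simp

lemma geod_poly_cayley_inv:
  assumes q: "cmod q = 1" and w: "Im w > 0"
  shows "geod_poly (cayley_inv q (of_real s)) (cayley_inv q (of_real t)) (cayley_inv q w)
      * ((of_real s + \<i>) * (of_real t + \<i>) * (w + \<i>) * (cnj w - \<i>))
    = 8 * q * of_real (semicircle_fun s t w)"
proof -
  have "w + \<i> \<noteq> 0" "cnj w - \<i> \<noteq> 0" "of_real s + \<i> \<noteq> 0" "of_real t + \<i> \<noteq> 0"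
    using w by (auto simp: complex_eq_iff)
  then have "geod_poly (cayley_inv q (of_real s)) (cayley_inv q (of_real t)) (cayley_inv q w)
      * ((of_real s + \<i>) * (of_real t + \<i>) * (w + \<i>) * (cnj w - \<i>))
    = 2 * q * ((w + cnj w - 2 * of_real s) * (w + cnj w - 2 * of_real t) - (w - cnj w)\<^sup>2)"
    unfolding geod_poly_def cnj_cayley_inv cayley_inv_eq
    using geod_poly_pullback_identity[OF unit_mult_cnj[OF q],
        of "(of_real s - \<i>) / (of_real s + \<i>)" "of_real s" \<i>
           "(of_real t - \<i>) / (of_real t + \<i>)" "of_real t"
           "(w - \<i>) / (w + \<i>)" w "(cnj w + \<i>) / (cnj w - \<i>)" "cnj w"]
    by simp
  also have "\<dots> = 8 * q * of_real (semicircle_fun s t w)"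
    unfolding semicircle_fun_def by (simp add: complex_eq_iff power2_eq_square algebra_simps)
  finally show ?thesis .
qed

lemma geod_poly_cayley_inv_pole:
  assumes q: "cmod q = 1" and w: "Im w > 0"
  shows "geod_poly q (cayley_inv q (of_real t)) (cayley_inv q w)
      * ((of_real t + \<i>) * (w + \<i>) * (cnj w - \<i>))
    = 8 * q * of_real (t - Re w)"
proof -
  have "w + \<i> \<noteq> 0" "cnj w - \<i> \<noteq> 0" "of_real t + \<i> \<noteq> 0"
    using w by (auto simp: complex_eq_iff)
  then have "geod_poly q (cayley_inv q (of_real t)) (cayley_inv q w)
      * ((of_real t + \<i>) * (w + \<i>) * (cnj w - \<i>))
    = 4 * q * (2 * of_real t - (w + cnj w))"
    unfolding geod_poly_def cnj_cayley_inv cayley_inv_eq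
    using geod_poly_pullback_identity_pole[OF unit_mult_cnj[OF q],
        of "(of_real t - \<i>) / (of_real t + \<i>)" "of_real t" \<i>
           "(w - \<i>) / (w + \<i>)" w "(cnj w + \<i>) / (cnj w - \<i>)" "cnj w"]
    by simp
  also have "\<dots> = 8 * q * of_real (t - Re w)"
    by (simp add: complex_add_cnj algebra_simps)
  finally show ?thesis .
qed

lemma geod_poly_cayley_semicircle:
  assumes q: "cmod q = 1" and a: "cmod a = 1" "a \<noteq> q" and b: "cmod b = 1" "b \<noteq> q"
    and z: "cmod z < 1" and e: "geod_poly a b z = 0"
  shows "semicircle_fun (Re (cayley q a)) (Re (cayley q b)) (cayley q z) = 0"
proof -
  have "geod_poly (cayley_inv q (of_real (Re (cayley q a)))) (cayley_inv q (of_real (Re (cayley q b))))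
      (cayley_inv q (cayley q z)) = 0"
    using e cayley_inv_Re_cayley_boundary[OF q a] cayley_inv_Re_cayley_boundary[OF q b]
      cayley_inv_cayley_disk[OF q z] by simp
  with geod_poly_cayley_inv[OF q Im_cayley_pos[OF q z], where s = "Re (cayley q a)" and t = "Re (cayley q b)"] q
  show ?thesis by auto
qed

lemma geod_poly_cayley_vertical:
  assumes q: "cmod q = 1" and b: "cmod b = 1" "b \<noteq> q"
    and z: "cmod z < 1" and e: "geod_poly q b z = 0"
  shows "Re (cayley q z) = Re (cayley q b)"
proof -
  have "geod_poly q (cayley_inv q (of_real (Re (cayley q b)))) (cayley_inv q (cayley q z)) = 0"
    using e cayley_inv_Re_cayley_boundary[OF q b] cayley_inv_cayley_disk[OF q z] by simp
  with geod_poly_cayley_inv_pole[OF q Im_cayley_pos[OF q z], where t = "Re (cayley q b)"] q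
  show ?thesis by auto
qed

text \<open>Proved in the chart sending the endpoint b to infinity, where the geodesic is a
  vertical half-line.\<close>

lemma geod_poly_norm_identity:
  assumes a: "cmod a = 1" and b: "cmod b = 1" and ab: "a \<noteq> b"
    and z: "cmod z < 1" and e: "geod_poly a b z = 0"
  shows "(1 - (cmod z)\<^sup>2) * cmod (a - b) = 2 * cmod (a - z) * cmod (b - z)"
proof -
  define t where "t = Re (cayley b a)"
  define w where "w = cayley b z"
  have w0: "Im w > 0" unfolding w_def using Im_cayley_pos[OF b z] .
  have rw: "Re w = t" unfolding w_def t_def
    using geod_poly_cayley_vertical[OF b a ab z] e geod_poly_commute by metis
  have aa: "a = cayley_inv b (of_real t)"
    unfolding t_def using cayley_inv_Re_cayley_boundary[OF b a ab] by simp
  have zz: "z = cayley_inv b w" unfolding w_def using cayley_inv_cayley_disk[OF b z] by simp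
  have w1: "w + \<i> \<noteq> 0" and t1: "of_real t + \<i> \<noteq> 0"
    using w0 by (auto simp: complex_eq_iff)
  have tw: "of_real t - w = - \<i> * of_real (Im w)" using rw by (simp add: complex_eq_iff)
  have e1: "1 - (cmod z)\<^sup>2 = 4 * Im w / (cmod (w + \<i>))\<^sup>2"
    unfolding zz using one_minus_norm_cayley_inv[OF b w1] .
  have e2: "cmod (a - z) = 2 * Im w / (cmod (of_real t + \<i>) * cmod (w + \<i>))"
    unfolding aa zz cayley_inv_diff[OF t1 w1] tw using b w0 by (simp add: norm_mult norm_divide)
  have e3: "cmod (a - b) = 2 / cmod (of_real t + \<i>)"
    using diff_cayley_inv[OF t1, of b] b unfolding aa
    by (simp add: norm_minus_commute norm_mult norm_divide)
  have e4: "cmod (b - z) = 2 / cmod (w + \<i>)"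
    unfolding zz diff_cayley_inv[OF w1] using b by (simp add: norm_mult norm_divide)
  have "cmod (of_real t + \<i>) > 0" "cmod (w + \<i>) > 0" using t1 w1 by auto
  then have "(4 * Im w / (cmod (w + \<i>))\<^sup>2) * (2 / cmod (of_real t + \<i>))
      = 2 * (2 * Im w / (cmod (of_real t + \<i>) * cmod (w + \<i>))) * (2 / cmod (w + \<i>))"
    by (simp add: field_simps power2_eq_square)
  then show ?thesis by (simp only: e1 e2 e3 e4)
qed

lemma Im_cayley_mult_Im_cayley:
  assumes a: "cmod a = 1" and b: "cmod b = 1" and ab: "a \<noteq> b"
    and z: "cmod z < 1" and e: "geod_poly a b z = 0"
  shows "Im (cayley a z) * Im (cayley b z) = 4 / (cmod (a - b))\<^sup>2"
proof -
  define u where "u = 1 - (cmod z)\<^sup>2"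
  define v where "v = cmod (a - b)"
  have za: "z \<noteq> a" and zb: "z \<noteq> b" using z a b by auto
  have u0: "u > 0" unfolding u_def using z by (simp add: abs_square_less_1)
  have v0: "v > 0" unfolding v_def using ab by simp
  have m: "cmod (a - z) * cmod (b - z) = u * v / 2"
    using geod_poly_norm_identity[OF assms] unfolding u_def v_def by simp
  have "Im (cayley a z) * Im (cayley b z) = u\<^sup>2 / (cmod (a - z) * cmod (b - z))\<^sup>2"
    using Im_cayley[OF a za] Im_cayley[OF b zb] unfolding u_def
    by (simp add: norm_minus_commute power_mult_distrib power2_eq_square)
  also have "\<dots> = 4 / v\<^sup>2"
    unfolding m using u0 v0 by (simp add: field_simps power2_eq_square)
  finally show ?thesis unfolding v_def .
qed

lemma geod_poly_dist_endpoint_le: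
  assumes a: "cmod a = 1" and b: "cmod b = 1" and ab: "a \<noteq> b"
    and z: "cmod z < 1" and e: "geod_poly a b z = 0"
  shows "cmod (a - z) \<le> cmod (a - b)"
proof -
  have bz: "cmod (b - z) > 0" using z b by auto
  have "1 - cmod z \<le> cmod (b - z)" using norm_triangle_ineq2[of b z] b by simp
  then have "(1 - cmod z) * (1 + cmod z) \<le> cmod (b - z) * 2"
    using z by (intro mult_mono) auto
  then have "1 - (cmod z)\<^sup>2 \<le> 2 * cmod (b - z)" by (simp add: power2_eq_square algebra_simps)
  then have "2 * cmod (a - z) * cmod (b - z) \<le> 2 * cmod (b - z) * cmod (a - b)"
    unfolding geod_poly_norm_identity[OF assms, symmetric] by (simp add: mult_right_mono)
  then show ?thesis using bz by (simp add: mult.commute)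
qed

section \<open>Horocycles and hyperbolic length\<close>

lemma horocycle_Im_cayley:
  assumes p: "cmod p = 1" and r: "0 < r" "r < 1" and z: "z \<in> horocycle p r"
  shows "cmod z < 1" "Im (cayley p z) = (1 - r) / r"
proof -
  have h: "cmod (z - of_real (1 - r) * p) = r" and zp: "z \<noteq> p"
    using z by (auto simp: horocycle_def)
  define c where "c = Re z * Re p + Im z * Im p"
  have pp: "(Re p)\<^sup>2 + (Im p)\<^sup>2 = 1" using p cmod_power2[of p] by simp
  have "(Re z - (1 - r) * Re p)\<^sup>2 + (Im z - (1 - r) * Im p)\<^sup>2 = r\<^sup>2"
    using h cmod_power2[of "z - of_real (1 - r) * p"] by simp
  then have "(cmod z)\<^sup>2 - 2 * ((1 - r) * c) + (1 - r)\<^sup>2 * ((Re p)\<^sup>2 + (Im p)\<^sup>2) = r\<^sup>2"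
    unfolding cmod_power2 c_def by (simp add: power2_eq_square algebra_simps)
  then have e1: "1 - (cmod z)\<^sup>2 = 2 * (1 - r) * (1 - c)"
    unfolding pp by (simp add: power2_eq_square algebra_simps)
  have "(cmod (p - z))\<^sup>2 = (Re p)\<^sup>2 + (Im p)\<^sup>2 - 2 * c + (cmod z)\<^sup>2"
    unfolding cmod_power2 c_def by (simp add: power2_eq_square algebra_simps)
  with e1 pp have e2: "(cmod (p - z))\<^sup>2 = 2 * r * (1 - c)"
    by (simp add: algebra_simps)
  have "(cmod (p - z))\<^sup>2 > 0" using zp by simp
  then have c1: "1 - c > 0" using e2 r by (simp add: zero_less_mult_iff)
  then have "1 - (cmod z)\<^sup>2 > 0" unfolding e1 using r by simp
  then have "(cmod z)\<^sup>2 < 1" by simp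
  then show "cmod z < 1" by (simp add: abs_square_less_1)
  show "Im (cayley p z) = (1 - r) / r"
    unfolding Im_cayley[OF p zp] e1 e2 using c1 r by (simp add: field_simps)
qed

text \<open>The Cayley chart is an isometry onto the upper half-plane, with metric |dw| / Im w.\<close>

lemma hyp_speed_cayley:
  assumes p: "cmod p = 1" and z: "cmod z < 1"
  shows "2 * cmod D / (1 - (cmod z)\<^sup>2) = cmod (D * (2 * \<i> * p / (p - z)\<^sup>2)) / Im (cayley p z)"
proof -
  have zp: "z \<noteq> p" using p z by auto
  then have "cmod (p - z) > 0" by simp
  then show ?thesis unfolding Im_cayley[OF p zp] using p
    by (simp add: norm_mult norm_divide norm_power field_simps)
qed

lemma has_integral_abs_deriv_mono:
  fixes f f' :: "real \<Rightarrow> real"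
  assumes ab: "a \<le> b" and S: "finite S" and mono: "mono_on {a..b} f"
    and cont: "continuous_on {a..b} f"
    and deriv: "\<And>x. x \<in> {a<..<b} - S \<Longrightarrow> (f has_real_derivative f' x) (at x)"
  shows "((\<lambda>x. \<bar>f' x\<bar>) has_integral (f b - f a)) {a..b}"
proof (rule has_integral_spike_finite[of "S \<union> {a, b}"])
  show "finite (S \<union> {a, b})" using S by simp
  show "(f' has_integral (f b - f a)) {a..b}"
    using deriv by (intro fundamental_theorem_of_calculus_interior_strong[OF S ab _ cont])
      (simp add: has_real_derivative_iff_has_vector_derivative)
  show "\<bar>f' x\<bar> = f' x" if "x \<in> {a..b} - (S \<union> {a, b})" for x
    using mono_on_imp_deriv_nonneg[OF mono deriv, of x] that by simp
qed

lemma has_integral_abs_deriv_inj: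
  fixes f f' :: "real \<Rightarrow> real"
  assumes ab: "a \<le> b" and S: "finite S" and inj: "inj_on f {a..b}"
    and cont: "continuous_on {a..b} f"
    and deriv: "\<And>x. x \<in> {a<..<b} - S \<Longrightarrow> (f has_real_derivative f' x) (at x)"
  shows "((\<lambda>x. \<bar>f' x\<bar>) has_integral \<bar>f b - f a\<bar>) {a..b}"
proof -
  consider "strict_mono_on {a..b} f" | "strict_antimono_on {a..b} f"
    using injective_eq_monotone_map[of "{a..b}" f] inj cont by auto
  then show ?thesis
  proof cases
    case 1
    then have mono: "mono_on {a..b} f" by (rule strict_mono_on_imp_mono_on)
    then have "f a \<le> f b" using ab by (auto dest: mono_onD)
    then show ?thesis
      using has_integral_abs_deriv_mono[OF ab S mono cont deriv] by simp
  next
    case 2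
    then have mono: "mono_on {a..b} (\<lambda>x. - f x)"
      by (auto simp: monotone_on_def order.order_iff_strict)
    then have "f b \<le> f a" using ab by (auto dest: mono_onD)
    moreover have "((\<lambda>x. - f x) has_real_derivative - f' x) (at x)" if "x \<in> {a<..<b} - S" for x
      using deriv[OF that] by (rule DERIV_minus)
    ultimately show ?thesis
      using has_integral_abs_deriv_mono[OF ab S mono continuous_on_minus[OF cont],
          where f' = "\<lambda>x. - f' x"] by simp
  qed
qed

lemma horocyclic_speed:
  fixes \<gamma> :: "real \<Rightarrow> complex"
  assumes p: "cmod p = 1" and D: "(\<gamma> has_vector_derivative D) (at t)" and S: "open S" "t \<in> S"
    and on: "\<And>s. s \<in> S \<Longrightarrow> cmod (\<gamma> s) < 1 \<and> Im (cayley p (\<gamma> s)) = \<kappa>"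
  defines "f' \<equiv> Re (D * (2 * \<i> * p / (p - \<gamma> t)\<^sup>2))"
  shows "((\<lambda>s. Re (cayley p (\<gamma> s))) has_real_derivative f') (at t)"
    and "2 * cmod D / (1 - (cmod (\<gamma> t))\<^sup>2) = \<bar>f'\<bar> / \<kappa>"
proof -
  have np: "\<gamma> t \<noteq> p" using on[OF S(2)] p by auto
  have chart: "((\<lambda>s. cayley p (\<gamma> s)) has_vector_derivative (D * (2 * \<i> * p / (p - \<gamma> t)\<^sup>2))) (at t)"
    using field_vector_diff_chain_at[OF D has_field_derivative_cayley[OF np]] by (simp add: o_def)
  show "((\<lambda>s. Re (cayley p (\<gamma> s))) has_real_derivative f') (at t)"
    unfolding f'_def using has_field_derivative_Re[OF chart] .
  have "((\<lambda>s. Im (cayley p (\<gamma> s))) has_real_derivative 0) (at t)"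
  proof (rule has_field_derivative_transform_within_open[of "\<lambda>s. \<kappa>" 0 t S])
    show "\<And>s. s \<in> S \<Longrightarrow> \<kappa> = Im (cayley p (\<gamma> s))" using on by simp
  qed (use S in auto)
  then have "Im (D * (2 * \<i> * p / (p - \<gamma> t)\<^sup>2)) = 0"
    using DERIV_unique[OF has_field_derivative_Im[OF chart]] by blast
  then have "\<bar>f'\<bar> = cmod (D * (2 * \<i> * p / (p - \<gamma> t)\<^sup>2))"
    unfolding f'_def by (metis cmod_eq_Re)
  then show "2 * cmod D / (1 - (cmod (\<gamma> t))\<^sup>2) = \<bar>f'\<bar> / \<kappa>"
    using hyp_speed_cayley[OF p, of "\<gamma> t" D] on[OF S(2)] by simp
qed

lemma has_integral_hyp_length_horocyclic:
  fixes \<gamma> :: "real \<Rightarrow> complex"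
  assumes p: "cmod p = 1" and arc: "arc \<gamma>"
    and pw: "\<gamma> piecewise_C1_differentiable_on {0..1}"
    and on: "\<And>t. t \<in> {0..1} \<Longrightarrow> cmod (\<gamma> t) < 1 \<and> Im (cayley p (\<gamma> t)) = \<kappa>"
  shows "((\<lambda>t. 2 * norm (vector_derivative \<gamma> (at t)) / (1 - (cmod (\<gamma> t))\<^sup>2))
           has_integral (\<bar>Re (cayley p (\<gamma> 1)) - Re (cayley p (\<gamma> 0))\<bar> / \<kappa>)) {0..1}"
proof -
  define f where "f t = Re (cayley p (\<gamma> t))" for t
  obtain S where S: "finite S" and C1: "\<gamma> C1_differentiable_on {0..1} - S"
    using pw unfolding piecewise_C1_differentiable_on_def by blast
  obtain D where D: "\<And>t. t \<in> {0..1} - S \<Longrightarrow> (\<gamma> has_vector_derivative D t) (at t)"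
    using C1 unfolding C1_differentiable_on_def by metis
  have np: "\<gamma> t \<noteq> p" if "t \<in> {0..1}" for t using on[OF that] p by auto
  have "\<forall>t\<in>{0..1}. p - \<gamma> t \<noteq> 0" using np by force
  moreover have "continuous_on {0..1} \<gamma>" using arc by (simp add: arc_def path_def)
  ultimately have "continuous_on {0..1} (\<lambda>t. cayley p (\<gamma> t))"
    unfolding cayley_def by (intro continuous_intros) blast+
  then have cont: "continuous_on {0..1} f"
    unfolding f_def by (intro continuous_intros)
  have inj: "inj_on f {0..1}"
  proof (rule inj_onI)
    fix s t assume s: "s \<in> {0..1}" and t: "t \<in> {0..1}" and "f s = f t"
    then have "cayley p (\<gamma> s) = cayley p (\<gamma> t)"
      using on[OF s] on[OF t] unfolding f_def by (simp add: complex_eq_iff)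
    then have "\<gamma> s = \<gamma> t"
      by (metis cayley_inv_cayley[OF p np[OF s]] cayley_inv_cayley[OF p np[OF t]])
    then show "s = t" using arc s t by (auto simp: arc_def dest: inj_onD)
  qed
  define f' where "f' t = Re (D t * (2 * \<i> * p / (p - \<gamma> t)\<^sup>2))" for t
  have on': "\<And>s. s \<in> {0<..<1} \<Longrightarrow> cmod (\<gamma> s) < 1 \<and> Im (cayley p (\<gamma> s)) = \<kappa>"
    using on by simp
  have deriv: "(f has_real_derivative f' t) (at t)"
    and speed: "2 * norm (vector_derivative \<gamma> (at t)) / (1 - (cmod (\<gamma> t))\<^sup>2) = \<bar>f' t\<bar> / \<kappa>"
    if t: "t \<in> {0<..<1} - S" for t
  proof -
    have Dt: "(\<gamma> has_vector_derivative D t) (at t)" and t': "t \<in> {0<..<1}" using D t by auto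
    show "(f has_real_derivative f' t) (at t)"
      unfolding f_def[abs_def] f'_def
      by (rule horocyclic_speed(1)[OF p Dt open_greaterThanLessThan t' on'])
    show "2 * norm (vector_derivative \<gamma> (at t)) / (1 - (cmod (\<gamma> t))\<^sup>2) = \<bar>f' t\<bar> / \<kappa>"
      unfolding f'_def vector_derivative_at[OF Dt]
      by (rule horocyclic_speed(2)[OF p Dt open_greaterThanLessThan t' on'])
  qed
  have "((\<lambda>t. \<bar>f' t\<bar> / \<kappa>) has_integral
      \<bar>Re (cayley p (\<gamma> 1)) - Re (cayley p (\<gamma> 0))\<bar> / \<kappa>) {0..1}"
    using has_integral_divide[OF has_integral_abs_deriv_inj[OF _ S inj cont deriv]]
    unfolding f_def by simp
  then show ?thesis
  proof (rule has_integral_spike_finite[of "S \<union> {0, 1}", rotated 2])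
    show "finite (S \<union> {0, 1})" using S by simp
    fix t assume "t \<in> {0..1} - (S \<union> {0, 1})"
    then show "2 * cmod (vector_derivative \<gamma> (at t)) / (1 - (cmod (\<gamma> t))\<^sup>2) = \<bar>f' t\<bar> / \<kappa>"
      by (intro speed) auto
  qed
qed

lemma one_minus_norm_sq_horocyclic_le:
  assumes p: "cmod p = 1" and z: "cmod z < 1" and z': "cmod z' < 1"
    and k: "Im (cayley p z) = \<kappa>" and k': "Im (cayley p z') = \<kappa>"
  shows "1 - (cmod z)\<^sup>2 \<le> (1 + \<bar>Re (cayley p z') - Re (cayley p z)\<bar> / \<kappa>)\<^sup>2 * (1 - (cmod z')\<^sup>2)"
proof -
  define w where "w = cayley p z"
  define w' where "w' = cayley p z'"
  define L where "L = \<bar>Re w' - Re w\<bar> / \<kappa>"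
  have k0: "\<kappa> > 0" using Im_cayley_pos[OF p z] k by simp
  have L0: "L \<ge> 0" unfolding L_def using k0 by simp
  have wi: "w + \<i> \<noteq> 0" "w' + \<i> \<noteq> 0" using k k' k0 by (auto simp: w_def w'_def complex_eq_iff)
  have e: "1 - (cmod z)\<^sup>2 = 4 * \<kappa> / (cmod (w + \<i>))\<^sup>2"
    using one_minus_norm_cayley_inv[OF p wi(1)] cayley_inv_cayley_disk[OF p z] k by (simp add: w_def)
  have e': "1 - (cmod z')\<^sup>2 = 4 * \<kappa> / (cmod (w' + \<i>))\<^sup>2"
    using one_minus_norm_cayley_inv[OF p wi(2)] cayley_inv_cayley_disk[OF p z'] k' by (simp add: w'_def)
  have "\<kappa> \<le> cmod (w + \<i>)" using abs_Im_le_cmod[of "w + \<i>"] k k0 by (simp add: w_def)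
  moreover have "cmod (w' - w) = L * \<kappa>"
    using k k' k0 by (simp add: w_def w'_def L_def cmod_eq_Re)
  ultimately have "cmod (w' - w) \<le> L * cmod (w + \<i>)"
    using L0 by (simp add: mult_left_mono)
  then have "cmod (w' + \<i>) \<le> (1 + L) * cmod (w + \<i>)"
    using norm_triangle_ineq[of "w + \<i>" "w' - w"] by (simp add: algebra_simps)
  then have "(cmod (w' + \<i>))\<^sup>2 \<le> ((1 + L) * cmod (w + \<i>))\<^sup>2"
    by (rule power_mono) simp
  then have "4 * \<kappa> / (cmod (w + \<i>))\<^sup>2 \<le> (1 + L)\<^sup>2 * (4 * \<kappa> / (cmod (w' + \<i>))\<^sup>2)"
    using wi k0 unfolding power_mult_distrib by (simp add: field_simps)
  then show ?thesis unfolding e e' L_def w_def w'_def .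
qed

section \<open>Exteriors of semicircles\<close>

lemma semicircle_fun_inversion:
  assumes v: "v \<noteq> 0"
  shows "semicircle_fun s t (of_real s - 1 / v) = (1 - (s - t) * Re v) / (cmod v)\<^sup>2"
proof -
  define n where "n = (Re v)\<^sup>2 + (Im v)\<^sup>2"
  have n: "(cmod v)\<^sup>2 = n" unfolding n_def by (rule cmod_power2)
  have n0: "n \<noteq> 0" using v n by auto
  have "Re (of_real s - 1 / v) - s = - Re v / n"
    and "Re (of_real s - 1 / v) - t = (s - t) - Re v / n"
    and "Im (of_real s - 1 / v) = Im v / n"
    unfolding n_def by (simp_all add: Re_divide Im_divide power2_eq_square)
  then have "semicircle_fun s t (of_real s - 1 / v) = (- Re v / n) * ((s - t) - Re v / n) + (Im v / n)\<^sup>2"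
    unfolding semicircle_fun_def by simp
  also have "\<dots> = - Re v * (s - t) / n + ((Re v)\<^sup>2 + (Im v)\<^sup>2) / n\<^sup>2"
    using n0 by (simp add: field_simps power2_eq_square)
  also have "\<dots> = (1 - (s - t) * Re v) / n"
    using n0 unfolding n_def[symmetric] by (simp add: field_simps power2_eq_square)
  finally show ?thesis unfolding n .
qed

text \<open>The inversion v \<mapsto> s - 1/v maps a convex half-strip onto the exterior of the semicircle
  with diameter [s, t] in the upper half-plane.\<close>

lemma connected_semicircle_exterior_half_plane:
  "connected {w. Im w > 0 \<and> semicircle_fun s t w > 0}"
proof -
  define H where "H = {v::complex. Im v > 0 \<and> (s - t) * Re v < 1}"
  have "H = {v. Im v > 0} \<inter> {v. inner (of_real (s - t)) v < 1}"
    by (auto simp: H_def inner_complex_def)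
  then have "convex H" by (metis convex_Int convex_halfspace_Im_gt convex_halfspace_lt)
  moreover have "continuous_on H (\<lambda>v. of_real s - 1 / v)"
    by (auto simp: H_def intro!: continuous_intros)
  ultimately have "connected ((\<lambda>v. of_real s - 1 / v) ` H)"
    by (intro connected_continuous_image convex_connected)
  moreover have "(\<lambda>v. of_real s - 1 / v) ` H = {w. Im w > 0 \<and> semicircle_fun s t w > 0}"
  proof (intro equalityI subsetI)
    fix w assume "w \<in> (\<lambda>v. of_real s - 1 / v) ` H"
    then obtain v where v: "Im v > 0" "(s - t) * Re v < 1" and w: "w = of_real s - 1 / v"
      by (auto simp: H_def)
    have v0: "v \<noteq> 0" using v by auto
    have "Im w = Im v / (cmod v)\<^sup>2"
      unfolding w by (simp add: Im_divide cmod_power2 power2_eq_square norm_mult_self)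
    moreover have "semicircle_fun s t w = (1 - (s - t) * Re v) / (cmod v)\<^sup>2"
      unfolding w by (rule semicircle_fun_inversion[OF v0])
    ultimately show "w \<in> {w. Im w > 0 \<and> semicircle_fun s t w > 0}"
      using v v0 by simp
  next
    fix w assume w: "w \<in> {w. Im w > 0 \<and> semicircle_fun s t w > 0}"
    then have ws: "w - of_real s \<noteq> 0" by (auto simp: complex_eq_iff)
    define v where "v = - 1 / (w - of_real s)"
    have v0: "v \<noteq> 0" and wv: "w = of_real s - 1 / v" using ws by (simp_all add: v_def)
    have "(1 - (s - t) * Re v) / (cmod v)\<^sup>2 > 0"
      using w semicircle_fun_inversion[OF v0, of s t] unfolding wv by simp
    then have "(s - t) * Re v < 1" using v0 by (simp add: zero_less_divide_iff)
    moreover have "Im v = Im w / (cmod (w - of_real s))\<^sup>2"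
      by (simp add: v_def Im_divide cmod_power2 power2_eq_square norm_mult_self)
    then have "Im v > 0" using w ws by simp
    ultimately show "w \<in> (\<lambda>v. of_real s - 1 / v) ` H"
      unfolding H_def wv by blast
  qed
  ultimately show ?thesis by simp
qed

lemma connected_semicircle_exterior:
  assumes q: "cmod q = 1"
  shows "connected {z. cmod z < 1 \<and> semicircle_fun s t (cayley q z) > 0}"
proof -
  define E where "E = {w. Im w > 0 \<and> semicircle_fun s t w > 0}"
  have "continuous_on E (cayley_inv q)"
    unfolding cayley_inv_def[abs_def] E_def by (auto simp: complex_eq_iff intro!: continuous_intros)
  then have "connected (cayley_inv q ` E)"
    using connected_semicircle_exterior_half_plane unfolding E_def
    by (intro connected_continuous_image) auto
  moreover have "cayley_inv q ` E = {z. cmod z < 1 \<and> semicircle_fun s t (cayley q z) > 0}"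
  proof (intro equalityI subsetI)
    fix z assume "z \<in> cayley_inv q ` E"
    then obtain w where w: "Im w > 0" "semicircle_fun s t w > 0" and z: "z = cayley_inv q w"
      by (auto simp: E_def)
    have "cayley q z = w" unfolding z using w by (intro cayley_cayley_inv[OF q]) (auto simp: complex_eq_iff)
    then show "z \<in> {z. cmod z < 1 \<and> semicircle_fun s t (cayley q z) > 0}"
      using norm_cayley_inv_less_1[OF q w(1)] w z by simp
  next
    fix z assume "z \<in> {z. cmod z < 1 \<and> semicircle_fun s t (cayley q z) > 0}"
    then show "z \<in> cayley_inv q ` E"
      using Im_cayley_pos[OF q] cayley_inv_cayley_disk[OF q] unfolding E_def
      by (metis (mono_tags, lifting) image_eqI mem_Collect_eq)
  qed
  ultimately show ?thesis by simp
qed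

lemma semicircle_fun_pos_vertical:
  "Im w > 0 \<Longrightarrow> Re w = s \<Longrightarrow> semicircle_fun s t w > 0"
  unfolding semicircle_fun_def by simp

lemma semicircle_fun_pos_outer:
  assumes w: "Im w > 0" and on: "semicircle_fun s u w = 0" and u: "(u - s) * (u - t) > 0"
  shows "semicircle_fun s t w > 0"
proof -
  define x where "x = Re w"
  have eq: "semicircle_fun s t w = (x - s) * (u - t)"
    using on unfolding semicircle_fun_def x_def by (simp add: algebra_simps)
  have "(x - s) * (x - u) = - (Im w)\<^sup>2" using on unfolding semicircle_fun_def x_def by simp
  then have "(x - s) * (x - u) < 0" using w by simp
  then have "(x - s) * (u - s) > 0"
    by (smt (verit, ccfv_SIG) mult_less_0_iff zero_less_mult_iff)
  then show ?thesis unfolding eq using u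
    by (smt (verit, ccfv_SIG) mult_less_0_iff zero_less_mult_iff)
qed

lemma geod_poly_semicircle_fun_pos:
  assumes q: "cmod q = 1" and a: "cmod a = 1" and b: "cmod b = 1" "b \<noteq> q"
    and z: "cmod z < 1" "geod_poly a b z = 0"
    and a_out: "a = q \<or> a \<noteq> q \<and> (Re (cayley q a) - Re (cayley q b)) * (Re (cayley q a) - t) > 0"
  shows "semicircle_fun (Re (cayley q b)) t (cayley q z) > 0"
proof -
  have im: "Im (cayley q z) > 0" using Im_cayley_pos[OF q z(1)] .
  from a_out show ?thesis
  proof
    assume "a = q"
    then have "Re (cayley q z) = Re (cayley q b)"
      using geod_poly_cayley_vertical[OF q b z(1)] z(2) by simp
    then show ?thesis using semicircle_fun_pos_vertical[OF im] by simp
  next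
    assume a': "a \<noteq> q \<and> (Re (cayley q a) - Re (cayley q b)) * (Re (cayley q a) - t) > 0"
    then have "semicircle_fun (Re (cayley q a)) (Re (cayley q b)) (cayley q z) = 0"
      using geod_poly_cayley_semicircle[OF q a _ b z] by simp
    then show ?thesis
      using semicircle_fun_pos_outer[OF im _ conjunct2[OF a']] semicircle_fun_commute by metis
  qed
qed

lemma ge_exp_neg_sum:
  fixes u a :: "nat \<Rightarrow> real"
  assumes step: "\<And>n. u (Suc n) \<ge> u n * exp (- a n)"
  shows "u n \<ge> u 0 * exp (- (\<Sum>k<n. a k))"
proof (induction n)
  case (Suc n)
  have "u 0 * exp (- (\<Sum>k<Suc n. a k)) = u 0 * exp (- (\<Sum>k<n. a k)) * exp (- a n)"
    by (simp add: mult.assoc flip: exp_add)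
  also have "\<dots> \<le> u n * exp (- a n)" using Suc.IH by (simp add: mult_right_mono)
  also have "\<dots> \<le> u (Suc n)" by (rule step)
  finally show ?case .
qed simp

lemma bounded_below_two_step:
  fixes u a :: "nat \<Rightarrow> real"
  assumes pos: "u 0 > 0" "u 1 > 0" and a: "\<And>n. a n \<ge> 0" "summable a"
    and step: "\<And>n. u (Suc (Suc n)) \<ge> u n * exp (- a n)"
  shows "\<exists>c>0. \<forall>n. u n \<ge> c"
proof -
  define m where "m = min (u 0) (u 1)"
  have "u n \<ge> m * exp (- (\<Sum>k<n. a k))" for n
  proof (induction n rule: less_induct)
    case (less n)
    show ?case
    proof (cases "n < 2")
      case True
      have "m * exp (- (\<Sum>k<n. a k)) \<le> m * 1"
        using a(1) pos by (intro mult_left_mono) (auto simp: m_def sum_nonneg)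
      then show ?thesis using True by (auto simp: m_def less_2_cases_iff)
    next
      case False
      then obtain k where k: "n = Suc (Suc k)" by (metis add_2_eq_Suc le_Suc_ex not_less)
      have "m * exp (- (\<Sum>j<n. a j)) \<le> m * exp (- (\<Sum>j<k. a j)) * exp (- a k)"
        using a(1)[of "Suc k"] pos by (simp add: k m_def mult.assoc flip: exp_add)
      also have "\<dots> \<le> u k * exp (- a k)"
        using less.IH[of k] k by (simp add: mult_right_mono)
      finally show ?thesis using step[of k] k by simp
    qed
  qed
  moreover have "m * exp (- suminf a) \<le> m * exp (- (\<Sum>k<n. a k))" for n
    using sum_le_suminf[OF a(2), of "{..<n}"] a(1) pos by (simp add: m_def)
  moreover have "m * exp (- suminf a) > 0" using pos by (simp add: m_def)
  ultimately show ?thesis by (meson order_trans)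
qed

lemma strictly_between_real:
  fixes a b c :: real
  assumes "(c - a) * (c - b) < 0"
  shows "\<bar>b - c\<bar> = \<bar>a - b\<bar> - \<bar>c - a\<bar>" "{min b c..max b c} \<subseteq> {min a b..max a b}"
proof -
  have "a < c \<and> c < b \<or> b < c \<and> c < a" using assms by (auto simp: mult_less_0_iff)
  then show "\<bar>b - c\<bar> = \<bar>a - b\<bar> - \<bar>c - a\<bar>" "{min b c..max b c} \<subseteq> {min a b..max a b}"
    by auto
qed

section \<open>The horocyclic path\<close>

locale horocyclic_path =
  fixes g :: "nat \<Rightarrow> complex \<times> complex"
    and h :: "nat \<Rightarrow> real \<Rightarrow> complex"
    and P1 :: complex
  assumes geod: "\<And>n. is_geod (g n)"
    and nest: "nested g"
    and adj: "\<And>n. ends (g n) \<inter> ends (g (Suc n)) \<noteq> {}"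
    and no3: "\<And>i j k. i < j \<Longrightarrow> j < k \<Longrightarrow> ends (g i) \<inter> ends (g j) \<inter> ends (g k) = {}"
    and P1: "P1 \<in> geod_set (g 0)"
    and h_start: "h 0 0 = P1"
    and h_cont: "\<And>n. h (Suc n) 0 = h n 1"
    and h_end: "\<And>n. h n 1 \<in> geod_set (g (Suc n))"
    and h_arc: "\<And>n. arc (h n) \<and> h n piecewise_C1_differentiable_on {0..1}"
    and h_horo: "\<And>n p. p \<in> ends (g n) \<inter> ends (g (Suc n)) \<Longrightarrow>
        \<exists>r. 0 < r \<and> r < 1 \<and> h n ` {0..1} \<subseteq> horocycle p r"
begin

definition vertex :: "nat \<Rightarrow> complex" where
  "vertex n = (SOME p. p \<in> ends (g n) \<inter> ends (g (Suc n)))"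

text \<open>The ideal endpoints of g n are endpt n and endpt (n + 1), the latter being the
  vertex of the wedge between g n and g (n + 1).\<close>

definition endpt :: "nat \<Rightarrow> complex" where
  "endpt n = (if n = 0 then (if fst (g 0) = vertex 0 then snd (g 0) else fst (g 0))
              else vertex (n - 1))"

abbreviation P :: "nat \<Rightarrow> complex" where
  "P n \<equiv> h n 0"

lemma vertex_mem: "vertex n \<in> ends (g n) \<inter> ends (g (Suc n))"
  unfolding vertex_def using adj[of n] by (metis all_not_in_conv someI_ex)

lemma vertex_neq_Suc: "vertex n \<noteq> vertex (Suc n)"
proof
  assume "vertex n = vertex (Suc n)"
  then have "vertex n \<in> ends (g n) \<inter> ends (g (Suc n)) \<inter> ends (g (Suc (Suc n)))"
    using vertex_mem[of n] vertex_mem[of "Suc n"] by simp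
  then show False using no3[of n "Suc n" "Suc (Suc n)"] by simp
qed

lemma endpt_0: "endpt 0 = (if fst (g 0) = vertex 0 then snd (g 0) else fst (g 0))"
  unfolding endpt_def by (rule if_P) (rule refl)

lemma endpt_Suc: "endpt (Suc n) = vertex n"
  unfolding endpt_def by simp

lemma ends_eq_endpt: "ends (g n) = {endpt n, endpt (Suc n)}"
  and endpt_neq_Suc: "endpt n \<noteq> endpt (Suc n)"
proof -
  have ne: "fst (g n) \<noteq> snd (g n)" using geod[of n] by (simp add: is_geod_def)
  have two: "{a, b} = {fst (g n), snd (g n)}"
    if "a \<in> {fst (g n), snd (g n)}" "b \<in> {fst (g n), snd (g n)}" "a \<noteq> b" for a b
    using that ne by auto
  have "vertex n \<in> {fst (g n), snd (g n)}" using vertex_mem[of n] by (simp add: ends_def)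
  moreover have "endpt n \<in> {fst (g n), snd (g n)} \<and> endpt n \<noteq> vertex n"
  proof (cases n)
    case 0
    show ?thesis
    proof (cases "fst (g 0) = vertex 0")
      case True
      then show ?thesis using 0 ne by (simp add: endpt_0)
    next
      case False
      then show ?thesis using 0 \<open>vertex n \<in> {fst (g n), snd (g n)}\<close> by (auto simp: endpt_0)
    qed
  next
    case (Suc m)
    then show ?thesis using vertex_mem[of m] vertex_neq_Suc[of m] by (simp add: endpt_Suc ends_def)
  qed
  ultimately show "ends (g n) = {endpt n, endpt (Suc n)}" "endpt n \<noteq> endpt (Suc n)"
    using two[of "endpt n" "vertex n"] by (simp_all add: ends_def endpt_Suc)
qed

lemma norm_endpt: "cmod (endpt n) = 1"
proof -
  have "endpt n \<in> ends (g n)" using ends_eq_endpt[of n] by simp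
  then show ?thesis using geod[of n] by (auto simp: ends_def is_geod_def)
qed

lemma endpt_Suc_Suc_neq: "endpt (Suc (Suc n)) \<noteq> endpt n"
proof
  assume "endpt (Suc (Suc n)) = endpt n"
  then have "endpt n \<in> ends (g n) \<inter> ends (g (Suc n)) \<inter> ends (g (Suc (Suc n)))"
    using ends_eq_endpt[of n] ends_eq_endpt[of "Suc n"] ends_eq_endpt[of "Suc (Suc n)"] by simp
  then show False using no3[of n "Suc n" "Suc (Suc n)"] by simp
qed

lemma geod_set_geod_poly:
  assumes z: "z \<in> geod_set (g n)"
  shows "cmod z < 1" "geod_poly (endpt n) (endpt (Suc n)) z = 0"
proof -
  have e: "geod_poly (fst (g n)) (snd (g n)) z = 0"
    using geod_set_imp_geod_poly(2)[OF geod z] .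
  have "{fst (g n), snd (g n)} = {endpt n, endpt (Suc n)}"
    using ends_eq_endpt[of n] by (simp add: ends_def)
  then have "fst (g n) = endpt n \<and> snd (g n) = endpt (Suc n) \<or>
      fst (g n) = endpt (Suc n) \<and> snd (g n) = endpt n"
    by (simp add: doubleton_eq_iff)
  then show "geod_poly (endpt n) (endpt (Suc n)) z = 0"
    using e geod_poly_commute by metis
  show "cmod z < 1" using geod_set_imp_geod_poly(1)[OF geod z] .
qed

lemma P_mem: "P n \<in> geod_set (g n)"
  using P1 h_start h_end h_cont by (cases n) auto

lemma norm_P: "cmod (P n) < 1"
  using geod_set_geod_poly(1)[OF P_mem] .

definition height :: "nat \<Rightarrow> real" where
  "height n = Im (cayley (endpt (Suc n)) (P n))"

lemma horocyclic:
  assumes t: "t \<in> {0..1}"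
  shows "cmod (h n t) < 1 \<and> Im (cayley (endpt (Suc n)) (h n t)) = height n"
proof -
  have "endpt (Suc n) \<in> ends (g n) \<inter> ends (g (Suc n))"
    using ends_eq_endpt[of n] ends_eq_endpt[of "Suc n"] by simp
  then obtain r where r: "0 < r" "r < 1" and sub: "h n ` {0..1} \<subseteq> horocycle (endpt (Suc n)) r"
    using h_horo by blast
  have on: "cmod (h n s) < 1 \<and> Im (cayley (endpt (Suc n)) (h n s)) = (1 - r) / r"
    if "s \<in> {0..1}" for s
    using horocycle_Im_cayley[OF norm_endpt r] sub that by blast
  have "height n = (1 - r) / r" using on[of 0] by (simp add: height_def)
  then show ?thesis using on[OF t] by simp
qed

lemma height_pos: "height n > 0"
  unfolding height_def using Im_cayley_pos[OF norm_endpt norm_P] .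

lemma height_end: "Im (cayley (endpt (Suc n)) (P (Suc n))) = height n"
  using horocyclic[of 1 n] h_cont[of n] by simp

definition arc_len :: "nat \<Rightarrow> real" where
  "arc_len n = \<bar>Re (cayley (endpt (Suc n)) (P (Suc n))) - Re (cayley (endpt (Suc n)) (P n))\<bar> / height n"

lemma hyp_length_eq_arc_len: "hyp_length (h n) = arc_len n"
proof -
  have "((\<lambda>t. 2 * norm (vector_derivative (h n) (at t)) / (1 - (cmod (h n t))\<^sup>2)) has_integral
      arc_len n) {0..1}"
    unfolding arc_len_def h_cont
    by (rule has_integral_hyp_length_horocyclic[OF norm_endpt conjunct1[OF h_arc] conjunct2[OF h_arc]])
      (erule horocyclic)
  then show ?thesis unfolding hyp_length_def by (rule integral_unique)
qed

lemma arc_len_nonneg: "arc_len n \<ge> 0"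
  unfolding arc_len_def using height_pos[of n] by simp

section \<open>Summable lengths forbid accumulation at a point\<close>

lemma one_minus_norm_sq_P_le:
  "1 - (cmod (P n))\<^sup>2 \<le> (1 + arc_len n)\<^sup>2 * (1 - (cmod (P (Suc n)))\<^sup>2)"
  using one_minus_norm_sq_horocyclic_le[OF norm_endpt norm_P norm_P height_def[symmetric] height_end]
  unfolding arc_len_def .

lemma one_minus_norm_sq_P_bounded_below:
  assumes sm: "summable arc_len"
  shows "\<exists>c>0. \<forall>n. c \<le> 1 - (cmod (P n))\<^sup>2"
proof -
  define u where "u n = 1 - (cmod (P n))\<^sup>2" for n
  have u_pos: "u n > 0" for n using norm_P[of n] by (simp add: u_def abs_square_less_1)
  have "u n * exp (- (2 * arc_len n)) \<le> u (Suc n)" for n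
  proof -
    have "u n \<le> (1 + arc_len n)\<^sup>2 * u (Suc n)"
      using one_minus_norm_sq_P_le unfolding u_def .
    also have "\<dots> \<le> (exp (arc_len n))\<^sup>2 * u (Suc n)"
      using arc_len_nonneg[of n] u_pos[of "Suc n"]
      by (intro mult_right_mono power_mono exp_ge_add_one_self) auto
    finally show ?thesis by (simp add: exp_minus field_simps flip: exp_double)
  qed
  then have ge: "u n \<ge> u 0 * exp (- (\<Sum>k<n. 2 * arc_len k))" for n
    by (rule ge_exp_neg_sum)
  have "u 0 * exp (- (2 * suminf arc_len)) \<le> u n" for n
  proof -
    have "(\<Sum>k<n. arc_len k) \<le> suminf arc_len"
      using sum_le_suminf[OF sm, of "{..<n}"] arc_len_nonneg by auto
    then have "exp (- (2 * suminf arc_len)) \<le> exp (- (\<Sum>k<n. 2 * arc_len k))"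
      by (simp add: sum_distrib_left[symmetric])
    then show ?thesis
      using ge[of n] u_pos[of 0] by (meson mult_left_mono less_imp_le order_trans)
  qed
  moreover have "u 0 * exp (- (2 * suminf arc_len)) > 0" using u_pos[of 0] by simp
  ultimately show ?thesis unfolding u_def by blast
qed

lemma not_summable_arc_len:
  assumes acc: "accumulates_to_point g \<xi>"
  shows "\<not> summable arc_len"
proof
  assume "summable arc_len"
  then obtain c where "c > 0" and c: "\<And>n. c \<le> 1 - (cmod (P n))\<^sup>2"
    using one_minus_norm_sq_P_bounded_below by blast
  then obtain N where "geod_set (g N) \<subseteq> ball \<xi> (c / 2)"
    using acc unfolding accumulates_to_point_def by (meson half_gt_zero order_refl)
  then have "cmod (\<xi> - P N) < c / 2" using P_mem[of N] by (auto simp: dist_norm)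
  moreover have "1 - cmod (P N) \<le> cmod (\<xi> - P N)"
    using norm_triangle_ineq2[of \<xi> "P N"] acc by (simp add: accumulates_to_point_def)
  ultimately have close: "(1 - cmod (P N)) * 2 < c" by argo
  have "1 - (cmod (P N))\<^sup>2 = (1 - cmod (P N)) * (1 + cmod (P N))"
    by (simp add: power2_eq_square algebra_simps)
  also have "\<dots> \<le> (1 - cmod (P N)) * 2"
    using norm_P[of N] by (intro mult_left_mono) auto
  finally show False using c[of N] close by argo
qed

section \<open>Interlacing of the endpoints in a fixed chart\<close>

definition foot :: "nat \<Rightarrow> real" where
  "foot n = Re (cayley (endpt 0) (endpt n))"

lemma cayley_inv_foot:
  "endpt n \<noteq> endpt 0 \<Longrightarrow> cayley_inv (endpt 0) (of_real (foot n)) = endpt n"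
  unfolding foot_def by (rule cayley_inv_Re_cayley_boundary[OF norm_endpt norm_endpt])

lemma foot_neq:
  "endpt i \<noteq> endpt 0 \<Longrightarrow> endpt j \<noteq> endpt 0 \<Longrightarrow> endpt i \<noteq> endpt j \<Longrightarrow> foot i \<noteq> foot j"
  using cayley_inv_foot by metis

lemma geod_set_on_semicircle:
  assumes z: "z \<in> geod_set (g n)" and a: "endpt n \<noteq> endpt 0" and b: "endpt (Suc n) \<noteq> endpt 0"
  shows "semicircle_fun (foot n) (foot (Suc n)) (cayley (endpt 0) z) = 0"
  unfolding foot_def using geod_set_geod_poly[OF z]
  by (rule geod_poly_cayley_semicircle[OF norm_endpt norm_endpt a norm_endpt b])

text \<open>If the foot of endpt (n + 2) were not strictly between the feet of g n, the exterior of
  the semicircle g n in the chart (a connected set missing g n) would contain both P (n - 1)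
  and P (n + 1), which nestedness forbids.\<close>

lemma foot_between_step:
  assumes n: "n \<ge> 1" and a: "endpt n \<noteq> endpt 0" and b: "endpt (Suc n) \<noteq> endpt 0"
    and prev: "endpt (n - 1) = endpt 0 \<or> endpt (n - 1) \<noteq> endpt 0 \<and>
      (foot (n - 1) - foot n) * (foot (n - 1) - foot (Suc n)) > 0"
  shows "endpt (Suc (Suc n)) \<noteq> endpt 0 \<and>
    (foot (Suc (Suc n)) - foot n) * (foot (Suc (Suc n)) - foot (Suc n)) < 0"
proof (rule ccontr)
  assume neg: "\<not> ?thesis"
  define E where "E = {z. cmod z < 1 \<and> semicircle_fun (foot n) (foot (Suc n)) (cayley (endpt 0) z) > 0}"
  have "E \<subseteq> Disk - geod_set (g n)"
    using geod_set_on_semicircle[OF _ a b] by (force simp: E_def)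
  moreover obtain m where m: "n = Suc m" using n by (cases n) auto
  have "P m \<in> E"
    using geod_set_geod_poly[OF P_mem[of m]] prev
      geod_poly_semicircle_fun_pos[where a = "endpt m" and z = "P m" and t = "foot (Suc n)",
        OF norm_endpt norm_endpt norm_endpt a]
    by (simp add: E_def foot_def m)
  moreover have "P (Suc n) \<in> E"
  proof -
    have "endpt (Suc (Suc n)) = endpt 0 \<or> endpt (Suc (Suc n)) \<noteq> endpt 0 \<and>
        (foot (Suc (Suc n)) - foot (Suc n)) * (foot (Suc (Suc n)) - foot n) > 0"
    proof (cases "endpt (Suc (Suc n)) = endpt 0")
      case False
      then have "foot (Suc (Suc n)) \<noteq> foot n" "foot (Suc (Suc n)) \<noteq> foot (Suc n)"
        using foot_neq[OF False a endpt_Suc_Suc_neq] foot_neq[OF False b] endpt_neq_Suc[of "Suc n"]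
        by metis+
      then show ?thesis using neg False by (auto simp: mult.commute less_le)
    qed simp
    then have "semicircle_fun (foot (Suc n)) (foot n) (cayley (endpt 0) (P (Suc n))) > 0"
      using geod_set_geod_poly[OF P_mem[of "Suc n"]] geod_poly_commute
        geod_poly_semicircle_fun_pos[where a = "endpt (Suc (Suc n))" and z = "P (Suc n)" and t = "foot n",
          OF norm_endpt norm_endpt norm_endpt b]
      by (simp add: foot_def)
    then show ?thesis
      using norm_P semicircle_fun_commute by (simp add: E_def)
  qed
  ultimately have "connected_component (Disk - geod_set (g n)) (P m) (P (Suc n))"
    using connected_semicircle_exterior[OF norm_endpt] unfolding E_def
    by (intro connected_componentI) auto
  then show False
    using nest n P_mem[of m] P_mem[of "Suc n"] m unfolding nested_def by auto
qed

lemma foot_interlacing: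
  "n \<ge> 1 \<Longrightarrow> endpt n \<noteq> endpt 0 \<and> endpt (Suc n) \<noteq> endpt 0 \<and> endpt (Suc (Suc n)) \<noteq> endpt 0 \<and>
    (foot (Suc (Suc n)) - foot n) * (foot (Suc (Suc n)) - foot (Suc n)) < 0"
proof (induction n rule: nat_induct_at_least)
  case base
  have "endpt 1 \<noteq> endpt 0" "endpt 2 \<noteq> endpt 0"
    using endpt_neq_Suc[of 0] endpt_Suc_Suc_neq[of 0] by (auto simp: numeral_2_eq_2)
  then show ?case using foot_between_step[of 1] by (simp add: numeral_2_eq_2)
next
  case (Suc n)
  then have "(foot n - foot (Suc n)) * (foot n - foot (Suc (Suc n))) > 0"
    by (smt (verit, best) mult_less_0_iff zero_less_mult_iff)
  then show ?case using Suc foot_between_step[of "Suc n"] by simp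
qed

lemma endpt_neq_0: "n \<ge> 1 \<Longrightarrow> endpt n \<noteq> endpt 0"
  using foot_interlacing by blast

lemma foot_between:
  "n \<ge> 1 \<Longrightarrow> (foot (Suc (Suc n)) - foot n) * (foot (Suc (Suc n)) - foot (Suc n)) < 0"
  using foot_interlacing by blast

section \<open>Non-summable lengths force accumulation at a point\<close>

definition gap :: "nat \<Rightarrow> real" where
  "gap n = \<bar>foot n - foot (Suc n)\<bar>"

definition foot_ivl :: "nat \<Rightarrow> real set" where
  "foot_ivl n = {min (foot n) (foot (Suc n))..max (foot n) (foot (Suc n))}"

lemma gap_Suc: "n \<ge> 1 \<Longrightarrow> gap (Suc n) = gap n - \<bar>foot (Suc (Suc n)) - foot n\<bar>"
  using strictly_between_real(1)[OF foot_between] unfolding gap_def .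

lemma foot_ivl_antimono:
  assumes "1 \<le> n" "n \<le> m"
  shows "foot_ivl m \<subseteq> foot_ivl n"
  using assms(2)
proof (induction m rule: dec_induct)
  case (step m)
  then have "foot_ivl (Suc m) \<subseteq> foot_ivl m"
    using strictly_between_real(2)[OF foot_between] assms(1) unfolding foot_ivl_def by simp
  then show ?case using step.IH by blast
qed simp

lemma foot_mem_ivl: "1 \<le> n \<Longrightarrow> n \<le> m \<Longrightarrow> foot m \<in> foot_ivl n"
  using foot_ivl_antimono[of n m] by (auto simp: foot_ivl_def)

lemma abs_diff_le_gap: "x \<in> foot_ivl n \<Longrightarrow> y \<in> foot_ivl n \<Longrightarrow> \<bar>x - y\<bar> \<le> gap n"
  unfolding foot_ivl_def gap_def by (auto simp: abs_le_iff)

lemma abs_foot_le: "1 \<le> m \<Longrightarrow> \<bar>foot m\<bar> \<le> \<bar>foot 1\<bar> + \<bar>foot 2\<bar>"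
  using foot_mem_ivl[of 1 m] by (auto simp: foot_ivl_def numeral_2_eq_2)

lemma endpt_eq_cayley_inv: "1 \<le> n \<Longrightarrow> endpt n = cayley_inv (endpt 0) (of_real (foot n))"
  using cayley_inv_foot endpt_neq_0 by simp

lemma dist_geod_set_le_gap:
  assumes n: "1 \<le> n" "n \<le> m" and y: "y \<in> foot_ivl n" and z: "z \<in> geod_set (g m)"
  shows "dist (cayley_inv (endpt 0) (of_real y)) z \<le> 4 * gap n"
proof -
  have m: "1 \<le> m" using n by simp
  have "cmod (endpt m - z) \<le> cmod (endpt m - endpt (Suc m))"
    using geod_set_geod_poly[OF z]
    by (intro geod_poly_dist_endpoint_le[OF norm_endpt norm_endpt endpt_neq_Suc])
  also have "\<dots> \<le> 2 * \<bar>foot m - foot (Suc m)\<bar>"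
    using endpt_eq_cayley_inv[OF m] endpt_eq_cayley_inv[of "Suc m"]
      norm_cayley_inv_of_real_diff_le[OF norm_endpt] by simp
  also have "\<dots> \<le> 2 * gap n"
    using abs_diff_le_gap foot_mem_ivl n by simp
  finally have "cmod (endpt m - z) \<le> 2 * gap n" .
  moreover have "cmod (endpt m - cayley_inv (endpt 0) (of_real y)) \<le> 2 * gap n"
  proof -
    have "cmod (endpt m - cayley_inv (endpt 0) (of_real y)) \<le> 2 * \<bar>foot m - y\<bar>"
      using endpt_eq_cayley_inv[OF m] norm_cayley_inv_of_real_diff_le[OF norm_endpt] by simp
    also have "\<dots> \<le> 2 * gap n" using abs_diff_le_gap[OF foot_mem_ivl[OF n] y] by simp
    finally show ?thesis .
  qed
  ultimately show ?thesis
    using norm_triangle_ineq4[of "endpt m - z" "endpt m - cayley_inv (endpt 0) (of_real y)"]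
    by (simp add: dist_norm norm_minus_commute)
qed

lemma accumulates_if_gap_small:
  assumes small: "\<And>e. e > 0 \<Longrightarrow> \<exists>n\<ge>1. gap n < e"
  shows "\<exists>\<xi>. accumulates_to_point g \<xi>"
proof -
  have "Cauchy foot"
  proof (rule CauchyI)
    fix e :: real assume "e > 0"
    then obtain n where n: "n \<ge> 1" "gap n < e" using small by blast
    then have "\<forall>m\<ge>n. \<forall>m'\<ge>n. norm (foot m - foot m') < e"
      using abs_diff_le_gap foot_mem_ivl by fastforce
    then show "\<exists>M. \<forall>m\<ge>M. \<forall>n\<ge>M. norm (foot m - foot n) < e" by blast
  qed
  then obtain X where X: "foot \<longlonglongrightarrow> X" using Cauchy_convergent_iff convergent_def by blast
  have X_mem: "X \<in> foot_ivl n" if "n \<ge> 1" for n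
  proof (rule Lim_in_closed_set[OF _ _ _ X])
    show "\<forall>\<^sub>F m in sequentially. foot m \<in> foot_ivl n"
      using foot_mem_ivl[OF that] eventually_sequentially by blast
  qed (simp_all add: foot_ivl_def)
  have "accumulates_to_point g (cayley_inv (endpt 0) (of_real X))"
    unfolding accumulates_to_point_def
  proof (intro conjI allI impI norm_cayley_inv_of_real[OF norm_endpt])
    fix e :: real assume "e > 0"
    then obtain n where n: "n \<ge> 1" "gap n < e / 4" using small[of "e / 4"] by auto
    have "geod_set (g m) \<subseteq> ball (cayley_inv (endpt 0) (of_real X)) e" if "m \<ge> n" for m
      using dist_geod_set_le_gap[OF n(1) that X_mem[OF n(1)]] n(2) by fastforce
    then show "\<exists>N. \<forall>m\<ge>N. geod_set (g m) \<subseteq> ball (cayley_inv (endpt 0) (of_real X)) e" by blast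
  qed
  then show ?thesis by blast
qed

definition chord :: "nat \<Rightarrow> real" where
  "chord n = cmod (endpt n - endpt (Suc n))"

definition skip_chord :: "nat \<Rightarrow> real" where
  "skip_chord n = cmod (endpt (Suc (Suc n)) - endpt n)"

lemma chord_pos: "chord n > 0"
  unfolding chord_def using endpt_neq_Suc[of n] by simp

lemma height_Suc_mult_height: "height (Suc n) * height n = 4 / (chord (Suc n))\<^sup>2"
proof -
  have "Im (cayley (endpt (Suc n)) (P (Suc n))) * Im (cayley (endpt (Suc (Suc n))) (P (Suc n)))
      = 4 / (chord (Suc n))\<^sup>2"
    unfolding chord_def using geod_set_geod_poly[OF P_mem[of "Suc n"]]
    by (intro Im_cayley_mult_Im_cayley[OF norm_endpt norm_endpt endpt_neq_Suc])
  then show ?thesis unfolding height_end by (simp add: height_def mult.commute)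
qed

lemma height_Suc_Suc: "height (Suc (Suc n)) = height n * (chord (Suc n) / chord (Suc (Suc n)))\<^sup>2"
proof -
  have "height (Suc (Suc n)) * (height (Suc n) * height n)
      = height n * (height (Suc (Suc n)) * height (Suc n))" by simp
  then have "height (Suc (Suc n)) * (4 / (chord (Suc n))\<^sup>2) = height n * (4 / (chord (Suc (Suc n)))\<^sup>2)"
    unfolding height_Suc_mult_height .
  then show ?thesis
    using chord_pos[of "Suc n"] chord_pos[of "Suc (Suc n)"]
    by (simp add: field_simps power2_eq_square)
qed

lemma arc_len_eq: "arc_len n = 2 * skip_chord n / (chord n * chord (Suc n) * height n)"
proof -
  let ?p = "endpt (Suc n)"
  have "Re (cayley ?p (P n)) = Re (cayley ?p (endpt n))"
    using geod_set_geod_poly[OF P_mem[of n]] geod_poly_commute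
    by (metis geod_poly_cayley_vertical[OF norm_endpt norm_endpt endpt_neq_Suc])
  moreover have "Re (cayley ?p (P (Suc n))) = Re (cayley ?p (endpt (Suc (Suc n))))"
    using geod_set_geod_poly[OF P_mem[of "Suc n"]] endpt_neq_Suc[of "Suc n"]
    by (intro geod_poly_cayley_vertical[OF norm_endpt norm_endpt]) auto
  moreover have "\<bar>Re (cayley ?p (endpt (Suc (Suc n)))) - Re (cayley ?p (endpt n))\<bar>
      = 2 * skip_chord n / (chord n * chord (Suc n))"
    using abs_Re_cayley_boundary_diff[OF norm_endpt norm_endpt _ norm_endpt endpt_neq_Suc]
      endpt_neq_Suc[of "Suc n"]
    by (simp add: skip_chord_def chord_def norm_minus_commute mult.commute)
  ultimately show ?thesis unfolding arc_len_def by simp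
qed

lemma skip_chord_le_gap_diff: "skip_chord (Suc n) \<le> 2 * (gap (Suc n) - gap (Suc (Suc n)))"
proof -
  have "skip_chord (Suc n) \<le> 2 * \<bar>foot (Suc (Suc (Suc n))) - foot (Suc n)\<bar>"
    using endpt_eq_cayley_inv[of "Suc n"] endpt_eq_cayley_inv[of "Suc (Suc (Suc n))"]
      norm_cayley_inv_of_real_diff_le[OF norm_endpt] by (simp add: skip_chord_def)
  then show ?thesis using gap_Suc[of "Suc n"] by simp
qed

text \<open>The skip chords are summable because their chart lengths telescope in the gaps.\<close>

lemma summable_skip_chord: "summable skip_chord"
proof -
  have "summable (\<lambda>n. skip_chord (Suc n))"
  proof (rule summableI_nonneg_bounded)
    show "0 \<le> skip_chord (Suc n)" for n by (simp add: skip_chord_def)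
    fix N
    have "(\<Sum>i<N. skip_chord (Suc i)) \<le> (\<Sum>i<N. 2 * (gap (Suc i) - gap (Suc (Suc i))))"
      by (intro sum_mono skip_chord_le_gap_diff)
    also have "\<dots> = 2 * (\<Sum>i<N. gap (Suc i) - gap (Suc (Suc i)))"
      by (rule sum_distrib_left[symmetric])
    also have "\<dots> = 2 * (gap 1 - gap (Suc N))"
      using sum_lessThan_telescope'[of "\<lambda>i. gap (Suc i)" N] by simp
    also have "\<dots> \<le> 2 * gap 1" by (simp add: gap_def)
    finally show "(\<Sum>i<N. skip_chord (Suc i)) \<le> 2 * gap 1" .
  qed
  then show ?thesis by (rule summable_Suc_iff[THEN iffD1])
qed

lemma chord_bounded_below:
  assumes "\<beta> > 0" and gap: "\<And>n. n \<ge> 1 \<Longrightarrow> \<beta> \<le> gap n"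
  shows "\<exists>\<delta>>0. \<forall>n. \<delta> \<le> chord n"
proof -
  define M where "M = \<bar>foot 1\<bar> + \<bar>foot 2\<bar>"
  have "M \<ge> 0" by (simp add: M_def)
  have "2 * \<beta> / (1 + M)\<^sup>2 \<le> chord n" if n: "n \<ge> 1" for n
  proof -
    have "2 * \<beta> / (1 + M)\<^sup>2 \<le> 2 * gap n / (1 + M)\<^sup>2"
      using gap[OF n] \<open>M \<ge> 0\<close> by (simp add: divide_right_mono)
    also have "\<dots> \<le> chord n"
      using endpt_eq_cayley_inv[OF n] endpt_eq_cayley_inv[of "Suc n"] n
        norm_cayley_inv_of_real_diff_ge[OF norm_endpt abs_foot_le[OF n] abs_foot_le[of "Suc n"]]
      by (simp add: gap_def chord_def M_def)
    finally show ?thesis .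
  qed
  then have "\<forall>n. min (chord 0) (2 * \<beta> / (1 + M)\<^sup>2) \<le> chord n"
    by (metis min.cobounded1 min.coboundedI2 not_less_eq_eq le0 less_one not_le)
  moreover have "min (chord 0) (2 * \<beta> / (1 + M)\<^sup>2) > 0"
    using chord_pos[of 0] \<open>\<beta> > 0\<close> \<open>M \<ge> 0\<close> by simp
  ultimately show ?thesis by blast
qed

lemma height_bounded_below:
  assumes "\<delta> > 0" and chord: "\<And>n. \<delta> \<le> chord n"
  shows "\<exists>c>0. \<forall>n. c \<le> height n"
proof (rule bounded_below_two_step)
  show "0 < height 0" "0 < height 1" by (simp_all add: height_pos)
  show "0 \<le> 2 / \<delta> * skip_chord (Suc n)" for n using \<open>\<delta> > 0\<close> by (simp add: skip_chord_def)
  show "summable (\<lambda>n. 2 / \<delta> * skip_chord (Suc n))"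
    using summable_skip_chord by (simp add: summable_Suc_iff summable_mult)
  show "height n * exp (- (2 / \<delta> * skip_chord (Suc n))) \<le> height (Suc (Suc n))" for n
  proof -
    let ?s = "skip_chord (Suc n) / \<delta>"
    have "chord (Suc (Suc n)) \<le> chord (Suc n) + skip_chord (Suc n)"
      unfolding chord_def skip_chord_def
      using norm_triangle_ineq[of "endpt (Suc (Suc n)) - endpt (Suc n)" "endpt (Suc n) - endpt (Suc (Suc (Suc n)))"]
      by (simp add: norm_minus_commute)
    also have "skip_chord (Suc n) \<le> chord (Suc n) * ?s"
      using chord[of "Suc n"] \<open>\<delta> > 0\<close> by (simp add: skip_chord_def field_simps mult_right_mono)
    also have "chord (Suc n) + chord (Suc n) * ?s = chord (Suc n) * (1 + ?s)"
      by (simp add: algebra_simps)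
    also have "\<dots> \<le> chord (Suc n) * exp ?s"
      using chord_pos[of "Suc n"] by (intro mult_left_mono) auto
    finally have "exp (- ?s) \<le> chord (Suc n) / chord (Suc (Suc n))"
      using chord_pos[of "Suc (Suc n)"] by (simp add: exp_minus field_simps)
    then have "(exp (- ?s))\<^sup>2 \<le> (chord (Suc n) / chord (Suc (Suc n)))\<^sup>2"
      by (rule power_mono) simp
    then have "exp (- (2 / \<delta> * skip_chord (Suc n))) \<le> (chord (Suc n) / chord (Suc (Suc n)))\<^sup>2"
      by (simp add: exp_double[symmetric])
    then show ?thesis
      unfolding height_Suc_Suc using height_pos[of n] by (simp add: mult_left_mono)
  qed
qed

lemma summable_arc_len:
  assumes "\<beta> > 0" and "\<And>n. n \<ge> 1 \<Longrightarrow> \<beta> \<le> gap n"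
  shows "summable arc_len"
proof -
  obtain \<delta> where \<delta>: "\<delta> > 0" "\<And>n. \<delta> \<le> chord n" using chord_bounded_below[OF assms] by blast
  obtain c where c: "c > 0" "\<And>n. c \<le> height n" using height_bounded_below[OF \<delta>] by blast
  have "norm (arc_len n) \<le> 2 / (\<delta> * \<delta> * c) * skip_chord n" for n
  proof -
    have "\<delta> * \<delta> * c \<le> chord n * chord (Suc n) * height n"
      using \<delta> c chord_pos[of n] chord_pos[of "Suc n"] by (intro mult_mono) auto
    then have "2 * skip_chord n / (chord n * chord (Suc n) * height n) \<le> 2 * skip_chord n / (\<delta> * \<delta> * c)"
      using \<delta>(1) c(1) chord_pos[of n] chord_pos[of "Suc n"] height_pos[of n]
      by (intro divide_left_mono) (auto simp: skip_chord_def)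
    then show ?thesis using arc_len_nonneg[of n] by (simp add: arc_len_eq[symmetric])
  qed
  then show ?thesis
    by (rule summable_comparison_test'[OF summable_mult[OF summable_skip_chord]])
qed

end

theorem propositionA1:
  fixes g :: "nat \<Rightarrow> complex \<times> complex"
    and h :: "nat \<Rightarrow> real \<Rightarrow> complex"
    and P1 :: complex
  assumes geod: "\<And>n. is_geod (g n)"
    and nest: "nested g"
    and adj: "\<And>n. ends (g n) \<inter> ends (g (Suc n)) \<noteq> {}"
    and no3: "\<And>i j k. i < j \<Longrightarrow> j < k \<Longrightarrow> ends (g i) \<inter> ends (g j) \<inter> ends (g k) = {}"
    and P1: "P1 \<in> geod_set (g 0)"
    and h_start: "h 0 0 = P1"
    and h_cont: "\<And>n. h (Suc n) 0 = h n 1"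
    and h_end: "\<And>n. h n 1 \<in> geod_set (g (Suc n))"
    and h_arc: "\<And>n. arc (h n) \<and> h n piecewise_C1_differentiable_on {0..1}"
    and h_wedge: "\<And>n t. 0 < t \<Longrightarrow> t < 1 \<Longrightarrow> h n t \<in> wedge (g n) (g (Suc n))"
    and h_horo: "\<And>n p. p \<in> ends (g n) \<inter> ends (g (Suc n)) \<Longrightarrow>
        \<exists>r. 0 < r \<and> r < 1 \<and> h n ` {0..1} \<subseteq> horocycle p r"
  shows "(\<exists>\<xi>. accumulates_to_point g \<xi>) \<longleftrightarrow> \<not> summable (\<lambda>n. hyp_length (h n))"
proof -
  interpret horocyclic_path g h P1
    by (rule horocyclic_path.intro) fact+
  have len: "(\<lambda>n. hyp_length (h n)) = arc_len" using hyp_length_eq_arc_len by blast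
  show ?thesis
  proof
    assume "\<exists>\<xi>. accumulates_to_point g \<xi>"
    then show "\<not> summable (\<lambda>n. hyp_length (h n))" unfolding len using not_summable_arc_len by blast
  next
    assume "\<not> summable (\<lambda>n. hyp_length (h n))"
    then have not_sm: "\<not> summable arc_len" unfolding len .
    show "\<exists>\<xi>. accumulates_to_point g \<xi>"
    proof (rule accumulates_if_gap_small)
      fix e :: real assume "e > 0"
      show "\<exists>n\<ge>1. gap n < e"
      proof (rule ccontr)
        assume "\<not> (\<exists>n\<ge>1. gap n < e)"
        then have "\<And>n. n \<ge> 1 \<Longrightarrow> e \<le> gap n" by (simp add: not_less)
        then show False using summable_arc_len[OF \<open>e > 0\<close>] not_sm by blast
      qed
    qed
  qed
qed

end
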